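(* Let $K\ge 3$, $d\in\mathbb{N}$, $\eta>0$, and for each $k\in[K]=\{1,\dots,K\}$ let $n_k\in\mathbb{N}$ and points $x^k_1,\dots,x^k_{n_k}\in\mathbb{R}^d$ be given. Indices of marginals are taken cyclically: $K+1$ means $1$ and $0$ means $K$. For $\ell,t\in[K]$ define $\mathcal{K}^{(\ell,t)}\in\mathbb{R}^{n_\ell\times n_t}$ by $\mathcal{K}^{(\ell,t)}_{i,j}=\exp\!\big(-\tfrac1\eta\|x^\ell_i-x^t_j\|_2^2\big)$. Let $\mathcal{K}\in\mathbb{R}^{n_1\times\cdots\times n_K}$ be given by $\mathcal{K}_{i_1,\dots,i_K}=\exp\!\big(-\tfrac1\eta\sum_{k=1}^{K}\|x^k_{i_k}-x^{k+1}_{i_{k+1}}\|_2^2\big)=\prod_{k=1}^K\mathcal{K}^{(k,k+1)}_{i_k,i_{k+1}}$, let $\phi^k\in\mathbb{R}^{n_k}$, $k\in[K]$, be arbitrary vectors and $\Phi_{i_1,\dots,i_K}=\prod_{k=1}^K\phi^k_{i_k}$. For distinct $\ell,t\in[K]$ let $d(\ell,t)=t-\ell$ if $t\ge\ell$ and $d(\ell,t)=K-\ell+t$ otherwise, and define $\alpha^{(\ell,t)}\in\mathbb{R}^{n_\ell\times n_t}$ recursively by $\alpha^{(\ell,t)}=\mathcal{K}^{(\ell,t)}$ if $d(\ell,t)=1$ and $\alpha^{(\ell,t)}=\mathcal{K}^{(\ell,\ell+1)}\big(\phi^{\ell+1}\odot\alpha^{(\ell+1,t)}\big)$ otherwise.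 Define $\lambda^{(1,k)}\in\mathbb{R}^{n_1\times n_k}$ for $k=2,\dots,K$ by $\lambda^{(1,2)}=\mathcal{K}^{(1,2)}$ and $\lambda^{(1,k)}=\lambda^{(1,k-1)}\big(\phi^{k-1}\odot\mathcal{K}^{(k-1,k)}\big)$ for $k=3,\dots,K$. Then $$P_k(\mathcal{K}\odot\Phi)=\begin{cases}\phi^1\odot\big\langle\mathcal{K}^{(1,2)},\big(\phi^2\odot\alpha^{(2,1)}\big)^{\intercal}\big\rangle, & k=1,\\[2pt] \phi^k\odot\big\langle\alpha^{(k,1)},\big(\phi^1\odot\lambda^{(1,k)}\big)^{\intercal}\big\rangle, & k=2,\dots,K.\end{cases}$$
   Context: $P_k$ denotes the $k$-th marginal projection of a tensor $T\in\mathbb{R}^{n_1\times\cdots\times n_K}$: $[P_k(T)]_{i}=\sum T_{i_1,\dots,i_K}$, the sum over all $i_\ell\in[n_\ell]$, $\ell\neq k$, with $i_k=i$ fixed. $\odot$ between tensors of equal size (and between vectors) is the entrywise product; for a vector $v\in\mathbb{R}^n$ and a matrix $A\in\mathbb{R}^{n\times m}$, $v\odot A$ is the matrix with entries $v_iA_{ij}$. For matrices $G,H\in\mathbb{R}^{n\times m}$, $\langle G,H\rangle\in\mathbb{R}^n$ denotes the inner product along the second dimension: $\langle G,H\rangle_i=\sum_{j=1}^m G_{ij}H_{ij}$. *)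

theory Defs
  imports "HOL-Analysis.Analysis"
begin

text \<open>Matrices are functions nat => nat => real with 0-based entry indices
  (row i < rows, column j < cols); vectors are nat => real.
  Marginals are numbered 1..K.\<close>

type_synonym mat = "nat \<Rightarrow> nat \<Rightarrow> real"
type_synonym vec = "nat \<Rightarrow> real"

definition matmul :: "nat \<Rightarrow> mat \<Rightarrow> mat \<Rightarrow> mat" where
  "matmul m A B = (\<lambda>i j. \<Sum>r<m. A i r * B r j)"

definition vscale :: "vec \<Rightarrow> mat \<Rightarrow> mat" where
  "vscale v A = (\<lambda>i j. v i * A i j)"

definition mtransp :: "mat \<Rightarrow> mat" where
  "mtransp A = (\<lambda>i j. A j i)"

definition rowinner :: "nat \<Rightarrow> mat \<Rightarrow> mat \<Rightarrow> vec" where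
  "rowinner m G H = (\<lambda>i. \<Sum>j<m. G i j * H i j)"

definition csucc :: "nat \<Rightarrow> nat \<Rightarrow> nat" where
  "csucc K k = (if k = K then 1 else k + 1)"

definition cdist :: "nat \<Rightarrow> nat \<Rightarrow> nat \<Rightarrow> nat" where
  "cdist K l t = (if t \<ge> l then t - l else K - l + t)"

definition Kmat :: "real \<Rightarrow> (nat \<Rightarrow> nat \<Rightarrow> real ^ 'd) \<Rightarrow> nat \<Rightarrow> nat \<Rightarrow> mat" where
  "Kmat \<eta> x l t = (\<lambda>i j. exp (- (1 / \<eta>) * (norm (x l i - x t j))\<^sup>2))"

definition tidx :: "nat \<Rightarrow> (nat \<Rightarrow> nat) \<Rightarrow> (nat \<Rightarrow> nat) set" where
  "tidx K n = PiE {1..K} (\<lambda>k. {..<n k})"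

definition Ktens :: "nat \<Rightarrow> real \<Rightarrow> (nat \<Rightarrow> nat \<Rightarrow> real ^ 'd) \<Rightarrow> (nat \<Rightarrow> nat) \<Rightarrow> real" where
  "Ktens K \<eta> x = (\<lambda>i. exp (- (1 / \<eta>) *
      (\<Sum>k=1..K. (norm (x k (i k) - x (csucc K k) (i (csucc K k))))\<^sup>2)))"

definition Phi :: "nat \<Rightarrow> (nat \<Rightarrow> vec) \<Rightarrow> (nat \<Rightarrow> nat) \<Rightarrow> real" where
  "Phi K \<phi> = (\<lambda>i. \<Prod>k=1..K. \<phi> k (i k))"

definition marg :: "nat \<Rightarrow> (nat \<Rightarrow> nat) \<Rightarrow> nat \<Rightarrow> ((nat \<Rightarrow> nat) \<Rightarrow> real) \<Rightarrow> vec" where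
  "marg K n k T = (\<lambda>j. \<Sum>i\<in>{i \<in> tidx K n. i k = j}. T i)"

text \<open>alpha^(l,t) via the number m of remaining recursion steps (m = d(l,t) - 1)\<close>
fun alpha_rec :: "nat \<Rightarrow> (nat \<Rightarrow> nat) \<Rightarrow> real \<Rightarrow> (nat \<Rightarrow> nat \<Rightarrow> real ^ 'd) \<Rightarrow> (nat \<Rightarrow> vec)
      \<Rightarrow> nat \<Rightarrow> nat \<Rightarrow> nat \<Rightarrow> mat" where
  "alpha_rec K n \<eta> x \<phi> 0 l t = Kmat \<eta> x l t"
| "alpha_rec K n \<eta> x \<phi> (Suc m) l t =
     matmul (n (csucc K l)) (Kmat \<eta> x l (csucc K l))
       (vscale (\<phi> (csucc K l)) (alpha_rec K n \<eta> x \<phi> m (csucc K l) t))"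

definition alpha :: "nat \<Rightarrow> (nat \<Rightarrow> nat) \<Rightarrow> real \<Rightarrow> (nat \<Rightarrow> nat \<Rightarrow> real ^ 'd) \<Rightarrow> (nat \<Rightarrow> vec)
      \<Rightarrow> nat \<Rightarrow> nat \<Rightarrow> mat" where
  "alpha K n \<eta> x \<phi> l t = alpha_rec K n \<eta> x \<phi> (cdist K l t - 1) l t"

text \<open>lambda^(1,k), k = 2..K (values for k < 2 are irrelevant)\<close>
fun lam :: "(nat \<Rightarrow> nat) \<Rightarrow> real \<Rightarrow> (nat \<Rightarrow> nat \<Rightarrow> real ^ 'd) \<Rightarrow> (nat \<Rightarrow> vec) \<Rightarrow> nat \<Rightarrow> mat" where
  "lam n \<eta> x \<phi> (Suc (Suc (Suc k))) =
     matmul (n (k + 2)) (lam n \<eta> x \<phi> (k + 2)) (vscale (\<phi> (k + 2)) (Kmat \<eta> x (k + 2) (k + 3)))"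
| "lam n \<eta> x \<phi> k = Kmat \<eta> x 1 2"

end

theory Submission
  imports Defs
begin

(* Write K (.) Phi as a product, around the cycle 1 -> 2 -> ... -> K -> 1, of edge weights
   K^(k,k+1)(i_k, i_(k+1)) and node weights phi^k(i_k).  Fixing i_1 = r cuts the cycle open into a
   chain 1 -> ... -> K+1 whose last node is a copy of node 1.  Summing a chain p -> ... -> q over its
   inner indices gives the weighted matrix product E_p diag(w_(p+1)) E_(p+1) ... E_(q-1), and fixing
   one more node k splits it into the chains 1 -> k and k -> K+1, which are lambda^(1,k) and
   alpha^(k,1). *)

lemma sum_PiE_insert:
  assumes "x \<notin> S"
  shows "(\<Sum>f\<in>PiE (insert x S) T. F f) = (\<Sum>y\<in>T x. \<Sum>g\<in>PiE S T. F (g(x := y)))"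
  unfolding PiE_insert_eq sum.reindex[OF inj_combinator[OF assms]]
  by (simp add: sum.cartesian_product case_prod_beta)

lemma sum_PiE_Un:
  assumes "A \<inter> B = {}"
  shows "(\<Sum>f\<in>PiE (A \<union> B) T. F f) = (\<Sum>g\<in>PiE A T. \<Sum>h\<in>PiE B T. F (merge A B (g, h)))"
proof -
  have merge_restrict: "merge A B (restrict f A, restrict f B) = f" if "f \<in> PiE (A \<union> B) T" for f
    using that by (auto simp: PiE_iff extensional_def merge_def fun_eq_iff)
  show ?thesis
    unfolding sum.cartesian_product
    by (rule sum.reindex_bij_witness[of _ "merge A B" "\<lambda>f. (restrict f A, restrict f B)"])
      (use assms merge_restrict in \<open>auto simp: PiE_iff extensional_def\<close>)
qed

(* chain_sum E w N p q = E_p diag(w_(p+1)) E_(p+1) ... diag(w_(q-1)) E_(q-1), where node k ranges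
   over {..<N k}; f indexes the inner nodes and the end nodes p, q carry a, b. *)

definition chain_weight ::
    "(nat \<Rightarrow> mat) \<Rightarrow> (nat \<Rightarrow> vec) \<Rightarrow> nat \<Rightarrow> nat \<Rightarrow> nat \<Rightarrow> nat \<Rightarrow> (nat \<Rightarrow> nat) \<Rightarrow> real" where
  "chain_weight E w p q a b f =
     (\<Prod>k\<in>{p..<q}. E k ((f(p := a, q := b)) k) ((f(p := a, q := b)) (Suc k))) *
     (\<Prod>k\<in>{Suc p..<q}. w k (f k))"

definition chain_sum :: "(nat \<Rightarrow> mat) \<Rightarrow> (nat \<Rightarrow> vec) \<Rightarrow> (nat \<Rightarrow> nat) \<Rightarrow> nat \<Rightarrow> nat \<Rightarrow> mat" where
  "chain_sum E w N p q = (\<lambda>a b. \<Sum>f\<in>PiE {Suc p..<q} (\<lambda>k. {..<N k}). chain_weight E w p q a b f)"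

lemma chain_sum_Suc: "chain_sum E w N p (Suc p) = E p"
  by (simp add: chain_sum_def chain_weight_def fun_eq_iff)

lemma chain_weight_cong:
  assumes "\<And>k. k \<in> {Suc p..<q} \<Longrightarrow> f k = g k"
  shows "chain_weight E w p q a b f = chain_weight E w p q a b g"
  unfolding chain_weight_def using assms
  by (intro arg_cong2[where f = "(*)"] prod.cong) auto

lemma chain_weight_split:
  assumes "p < m" "m < q"
  shows "chain_weight E w p q a b f =
           chain_weight E w p m a (f m) f * w m (f m) * chain_weight E w m q (f m) b f"
proof -
  let ?e = "\<lambda>g k. E k (g k) (g (Suc k))"
  have "(\<Prod>k\<in>{p..<q}. ?e (f(p := a, q := b)) k) =
          (\<Prod>k\<in>{p..<m}. ?e (f(p := a, q := b)) k) * (\<Prod>k\<in>{m..<q}. ?e (f(p := a, q := b)) k)"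
    using assms by (intro prod.atLeastLessThan_concat[symmetric]) auto
  also have "(\<Prod>k\<in>{p..<m}. ?e (f(p := a, q := b)) k) = (\<Prod>k\<in>{p..<m}. ?e (f(p := a, m := f m)) k)"
    using assms by (intro prod.cong) auto
  also have "(\<Prod>k\<in>{m..<q}. ?e (f(p := a, q := b)) k) = (\<Prod>k\<in>{m..<q}. ?e (f(m := f m, q := b)) k)"
    using assms by (intro prod.cong) auto
  finally have edges: "(\<Prod>k\<in>{p..<q}. ?e (f(p := a, q := b)) k) =
      (\<Prod>k\<in>{p..<m}. ?e (f(p := a, m := f m)) k) * (\<Prod>k\<in>{m..<q}. ?e (f(m := f m, q := b)) k)" .
  have nodes: "(\<Prod>k\<in>{Suc p..<q}. w k (f k)) =
      (\<Prod>k\<in>{Suc p..<m}. w k (f k)) * w m (f m) * (\<Prod>k\<in>{Suc m..<q}. w k (f k))"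
    using assms by (simp add: prod.atLeastLessThan_concat[symmetric, of "Suc p" m q]
        prod.atLeast_Suc_lessThan[of m q])
  show ?thesis
    unfolding chain_weight_def edges nodes by (simp add: ac_simps)
qed

lemma chain_sum_fun_upd:
  assumes "p < m" "m < q"
  shows "(\<Sum>g\<in>PiE ({Suc p..<m} \<union> {Suc m..<q}) (\<lambda>k. {..<N k}). chain_weight E w p q a b (g(m := c)))
           = chain_sum E w N p m a c * w m c * chain_sum E w N m q c b"
proof -
  let ?A = "{Suc p..<m}" and ?B = "{Suc m..<q}"
  have disj: "?A \<inter> ?B = {}" by auto
  have weight: "chain_weight E w p q a b ((merge ?A ?B (g, h))(m := c)) =
                  chain_weight E w p m a c g * w m c * chain_weight E w m q c b h" for g h
  proof -
    let ?f = "(merge ?A ?B (g, h))(m := c)"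
    have "chain_weight E w p q a b ?f =
            chain_weight E w p m a c ?f * w m c * chain_weight E w m q c b ?f"
      using chain_weight_split[OF assms, of E w a b ?f] by simp
    also have "chain_weight E w p m a c ?f = chain_weight E w p m a c g"
      using disj by (intro chain_weight_cong) simp
    also have "chain_weight E w m q c b ?f = chain_weight E w m q c b h"
      using disj by (intro chain_weight_cong) simp
    finally show ?thesis .
  qed
  show ?thesis
    unfolding sum_PiE_Un[OF disj] weight chain_sum_def
    by (simp add: sum_distrib_left sum_distrib_right ac_simps)
qed

lemma chain_sum_split:
  assumes "p < m" "m < q"
  shows "chain_sum E w N p q = matmul (N m) (chain_sum E w N p m) (vscale (w m) (chain_sum E w N m q))"
proof (intro ext)
  fix a b
  have nodes: "{Suc p..<q} = insert m ({Suc p..<m} \<union> {Suc m..<q})"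
    and fresh: "m \<notin> {Suc p..<m} \<union> {Suc m..<q}"
    using assms by auto
  show "chain_sum E w N p q a b =
          matmul (N m) (chain_sum E w N p m) (vscale (w m) (chain_sum E w N m q)) a b"
    unfolding chain_sum_def[of E w N p q] nodes sum_PiE_insert[OF fresh] chain_sum_fun_upd[OF assms]
    by (simp add: matmul_def vscale_def ac_simps)
qed

definition cycle_tensor :: "nat \<Rightarrow> (nat \<Rightarrow> mat) \<Rightarrow> (nat \<Rightarrow> vec) \<Rightarrow> (nat \<Rightarrow> nat) \<Rightarrow> real" where
  "cycle_tensor K E w i = (\<Prod>k=1..K. E k (i k) (i (csucc K k)) * w k (i k))"

(* Node K+1 of the chain is a copy of node 1, whose node weight is counted once. *)

lemma cycle_tensor_fun_upd_1:
  assumes "1 \<le> K"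
  shows "cycle_tensor K E w (g(1 := r)) = w 1 r * chain_weight E w 1 (Suc K) r r g"
proof -
  let ?i = "g(1 := r)"
  have edges: "(\<Prod>k=1..K. E k (?i k) (?i (csucc K k))) =
                 (\<Prod>k\<in>{1..<Suc K}. E k ((g(1 := r, Suc K := r)) k) ((g(1 := r, Suc K := r)) (Suc k)))"
    by (intro prod.cong) (auto simp: csucc_def)
  have "{1..K} = insert 1 {Suc 1..<Suc K}"
    using assms by auto
  then have nodes: "(\<Prod>k=1..K. w k (?i k)) = w 1 r * (\<Prod>k\<in>{Suc 1..<Suc K}. w k (g k))"
    by simp
  show ?thesis
    unfolding cycle_tensor_def prod.distrib edges nodes chain_weight_def by (simp add: ac_simps)
qed

lemma marg_eq_sum_PiE:
  assumes "k \<in> {1..K}" "j < n k"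
  shows "marg K n k T j = (\<Sum>g\<in>PiE ({1..K} - {k}) (\<lambda>k. {..<n k}). T (g(k := j)))"
proof -
  let ?R = "PiE ({1..K} - {k}) (\<lambda>k. {..<n k})"
  have idx: "tidx K n = PiE (insert k ({1..K} - {k})) (\<lambda>k. {..<n k})"
    using assms by (simp add: tidx_def insert_absorb)
  have fresh: "k \<notin> {1..K} - {k}" by simp
  have "marg K n k T j = (\<Sum>i\<in>tidx K n. if i k = j then T i else 0)"
    unfolding marg_def by (rule sum.inter_filter) (simp add: tidx_def finite_PiE)
  also have "\<dots> = (\<Sum>y<n k. \<Sum>g\<in>?R. if y = j then T (g(k := y)) else 0)"
    unfolding idx sum_PiE_insert[OF fresh] by simp
  also have "\<dots> = (\<Sum>g\<in>?R. \<Sum>y<n k. if y = j then T (g(k := y)) else 0)"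
    by (rule sum.swap)
  also have "\<dots> = (\<Sum>g\<in>?R. T (g(k := j)))"
    using assms by simp
  finally show ?thesis .
qed

lemma marg_cycle_tensor_1:
  assumes "1 \<le> K" "j < N 1"
  shows "marg K N 1 (cycle_tensor K E w) j = w 1 j * chain_sum E w N 1 (Suc K) j j"
proof -
  have nodes: "{1..K} - {1} = {Suc 1..<Suc K}" and "1 \<in> {1..K}"
    using assms by auto
  have "marg K N 1 (cycle_tensor K E w) j =
          (\<Sum>g\<in>PiE {Suc 1..<Suc K} (\<lambda>k. {..<N k}). w 1 j * chain_weight E w 1 (Suc K) j j g)"
    unfolding marg_eq_sum_PiE[where n = N, OF \<open>1 \<in> {1..K}\<close> assms(2)] nodes
      cycle_tensor_fun_upd_1[OF assms(1)] ..
  then show ?thesis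
    by (simp add: chain_sum_def sum_distrib_left)
qed

lemma marg_cycle_tensor:
  assumes "k \<in> {2..K}" "j < N k"
  shows "marg K N k (cycle_tensor K E w) j =
           w k j * matmul (N 1) (chain_sum E w N k (Suc K)) (vscale (w 1) (chain_sum E w N 1 k)) j j"
proof -
  let ?S = "{Suc 1..<k} \<union> {Suc k..<Suc K}"
  have nodes: "{1..K} - {k} = insert 1 ?S" and fresh: "1 \<notin> ?S"
    and "k \<in> {1..K}" "1 \<le> K" "1 < k" "1 \<noteq> k" "k < Suc K"
    using assms by auto
  have "marg K N k (cycle_tensor K E w) j =
          (\<Sum>r<N 1. \<Sum>g\<in>PiE ?S (\<lambda>k. {..<N k}). cycle_tensor K E w ((g(k := j))(1 := r)))"
    unfolding marg_eq_sum_PiE[where n = N, OF \<open>k \<in> {1..K}\<close> assms(2)] nodes sum_PiE_insert[OF fresh]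
      fun_upd_twist[OF \<open>1 \<noteq> k\<close>] ..
  also have "\<dots> = (\<Sum>r<N 1. w 1 r * (\<Sum>g\<in>PiE ?S (\<lambda>k. {..<N k}). chain_weight E w 1 (Suc K) r r (g(k := j))))"
    unfolding cycle_tensor_fun_upd_1[OF \<open>1 \<le> K\<close>] sum_distrib_left ..
  also have "\<dots> = (\<Sum>r<N 1. w 1 r * (chain_sum E w N 1 k r j * w k j * chain_sum E w N k (Suc K) j r))"
    unfolding chain_sum_fun_upd[OF \<open>1 < k\<close> \<open>k < Suc K\<close>] ..
  finally show ?thesis
    by (simp add: matmul_def vscale_def sum_distrib_left ac_simps)
qed

lemma Ktens_mult_Phi:
  "Ktens K \<eta> x i * Phi K \<phi> i = cycle_tensor K (\<lambda>k. Kmat \<eta> x k (csucc K k)) \<phi> i"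
  by (simp add: Ktens_def Phi_def Kmat_def cycle_tensor_def sum_distrib_left exp_sum prod.distrib)

lemma alpha_rec_eq_chain_sum:
  assumes "1 \<le> l" "l + m = K"
  shows "alpha_rec K n \<eta> x \<phi> m l 1 = chain_sum (\<lambda>k. Kmat \<eta> x k (csucc K k)) \<phi> n l (Suc K)"
  using assms
proof (induction m arbitrary: l)
  case 0
  then show ?case
    by (simp add: chain_sum_Suc csucc_def)
next
  case (Suc m)
  then have "csucc K l = Suc l"
    by (simp add: csucc_def)
  with Suc show ?case
    by (simp add: chain_sum_split[of l "Suc l" "Suc K"] chain_sum_Suc)
qed

lemma alpha_eq_chain_sum:
  assumes "l \<in> {2..K}"
  shows "alpha K n \<eta> x \<phi> l 1 = chain_sum (\<lambda>k. Kmat \<eta> x k (csucc K k)) \<phi> n l (Suc K)"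
  unfolding alpha_def using assms by (intro alpha_rec_eq_chain_sum) (auto simp: cdist_def)

lemma lam_eq_chain_sum:
  assumes "k \<in> {2..K}"
  shows "lam n \<eta> x \<phi> k = chain_sum (\<lambda>k. Kmat \<eta> x k (csucc K k)) \<phi> n 1 k"
proof -
  let ?E = "\<lambda>k. Kmat \<eta> x k (csucc K k)"
  have "lam n \<eta> x \<phi> (m + 2) = chain_sum ?E \<phi> n 1 (m + 2)" if "m + 2 \<le> K" for m
    using that
  proof (induction m)
    case 0
    then show ?case
      by (simp add: numeral_2_eq_2 chain_sum_Suc csucc_def)
  next
    case (Suc m)
    then have "csucc K (m + 2) = m + 3"
      by (simp add: csucc_def)
    have "lam n \<eta> x \<phi> (Suc m + 2) =
            matmul (n (m + 2)) (lam n \<eta> x \<phi> (m + 2)) (vscale (\<phi> (m + 2)) (Kmat \<eta> x (m + 2) (m + 3)))"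
      by (simp add: numeral_2_eq_2 numeral_3_eq_3)
    also have "\<dots> = matmul (n (m + 2)) (chain_sum ?E \<phi> n 1 (m + 2))
                      (vscale (\<phi> (m + 2)) (chain_sum ?E \<phi> n (m + 2) (Suc (m + 2))))"
      using Suc \<open>csucc K (m + 2) = m + 3\<close> by (simp add: chain_sum_Suc)
    also have "\<dots> = chain_sum ?E \<phi> n 1 (Suc (m + 2))"
      by (rule chain_sum_split[symmetric]) auto
    finally show ?case
      by simp
  qed
  moreover obtain m where "k = m + 2"
    using assms by (metis atLeastAtMost_iff le_add_diff_inverse2)
  ultimately show ?thesis
    using assms by simp
qed

lemma rowinner_mtransp: "rowinner m G (mtransp H) i = matmul m G H i i"
  by (simp add: rowinner_def mtransp_def matmul_def)

theorem theorem4: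
  fixes K :: nat and n :: "nat \<Rightarrow> nat" and \<eta> :: real
    and x :: "nat \<Rightarrow> nat \<Rightarrow> real ^ 'd" and \<phi> :: "nat \<Rightarrow> nat \<Rightarrow> real"
  assumes "K \<ge> 3" and "\<eta> > 0"
  shows "(\<forall>j < n 1.
           marg K n 1 (\<lambda>i. Ktens K \<eta> x i * Phi K \<phi> i) j =
           \<phi> 1 j * rowinner (n 2) (Kmat \<eta> x 1 2)
                      (mtransp (vscale (\<phi> 2) (alpha K n \<eta> x \<phi> 2 1))) j) \<and>
         (\<forall>k \<in> {2..K}. \<forall>j < n k.
           marg K n k (\<lambda>i. Ktens K \<eta> x i * Phi K \<phi> i) j =
           \<phi> k j * rowinner (n 1) (alpha K n \<eta> x \<phi> k 1)
                      (mtransp (vscale (\<phi> 1) (lam n \<eta> x \<phi> k))) j)"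
proof -
  let ?E = "\<lambda>k. Kmat \<eta> x k (csucc K k)"
  have tensor: "(\<lambda>i. Ktens K \<eta> x i * Phi K \<phi> i) = cycle_tensor K ?E \<phi>"
    by (simp add: Ktens_mult_Phi)
  have alpha_2_1: "alpha K n \<eta> x \<phi> 2 1 = chain_sum ?E \<phi> n 2 (Suc K)"
    using assms(1) by (intro alpha_eq_chain_sum) auto
  have kernel_1_2: "chain_sum ?E \<phi> n 1 2 = Kmat \<eta> x 1 2"
    using chain_sum_Suc[of ?E \<phi> n 1] assms(1) by (simp add: csucc_def numeral_2_eq_2)
  have cycle_at_1: "chain_sum ?E \<phi> n 1 (Suc K) =
                      matmul (n 2) (Kmat \<eta> x 1 2) (vscale (\<phi> 2) (alpha K n \<eta> x \<phi> 2 1))"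
    unfolding alpha_2_1 kernel_1_2[symmetric] using assms(1) by (intro chain_sum_split) auto
  show ?thesis
  proof (intro conjI allI ballI impI)
    fix j assume "j < n 1"
    then show "marg K n 1 (\<lambda>i. Ktens K \<eta> x i * Phi K \<phi> i) j =
                 \<phi> 1 j * rowinner (n 2) (Kmat \<eta> x 1 2) (mtransp (vscale (\<phi> 2) (alpha K n \<eta> x \<phi> 2 1))) j"
      unfolding tensor rowinner_mtransp cycle_at_1[symmetric] using assms(1)
      by (intro marg_cycle_tensor_1) auto
  next
    fix k j assume k: "k \<in> {2..K}" and "j < n k"
    then show "marg K n k (\<lambda>i. Ktens K \<eta> x i * Phi K \<phi> i) j =
                 \<phi> k j * rowinner (n 1) (alpha K n \<eta> x \<phi> k 1) (mtransp (vscale (\<phi> 1) (lam n \<eta> x \<phi> k))) j"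
      unfolding tensor rowinner_mtransp alpha_eq_chain_sum[OF k] lam_eq_chain_sum[OF k]
      by (rule marg_cycle_tensor)
  qed
qed

end
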